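(* Let $R$ be a commutative ring with nonzero identity, $S$ a multiplicatively closed subset of $R$, and $\delta$ an expansion of ideals of $R$; let $\delta_S$ be the expansion of ideals of $S^{-1}R$ given by $\delta_S(S^{-1}I)=S^{-1}(\delta(I))$. Let $I$ be an ideal of $R$. (1) If $I$ is a $\delta$-$n$-ideal of $R$ with $I\cap S=\emptyset$, then $S^{-1}I$ is a $\delta_S$-$n$-ideal of $S^{-1}R$. (2) If $S\cap Z(R)=S\cap Z_{\delta(I)}(R)=\emptyset$ and $S^{-1}I$ is a $\delta_S$-$n$-ideal of $S^{-1}R$, then $I$ is a $\delta$-$n$-ideal of $R$.
   Context: An expansion of ideals of a ring $R$ is a map $\delta$ from the set of ideals of $R$ to itself such that $I\subseteq\delta(I)$ for every ideal $I$, and $\delta(I)\subseteq\delta(J)$ whenever $I\subseteq J$. $\sqrt{0}$ denotes the nilradical of the ring in question. Given an expansion $\delta$ of ideals of a ring $R$, a proper ideal $I$ of $R$ is a $\delta$-$n$-ideal if whenever $a,b\in R$ with $ab\in I$ and $a\notin\sqrt{0}$, then $b\in\delta(I)$. $Z(R)$ denotes the set of zero-divisors of $R$, and for a proper ideal $J$ of $R$, $Z_J(R)=\{r\in R: rs\in J \text{ for some } s\in R\setminus J\}$. *)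

theory Defs
  imports "HOL-Algebra.Algebra"
begin

definition mult_closed :: "('a, 'b) ring_scheme \<Rightarrow> 'a set \<Rightarrow> bool" where
  "mult_closed R S \<longleftrightarrow> S \<subseteq> carrier R \<and> \<one>\<^bsub>R\<^esub> \<in> S \<and>
     (\<forall>s\<in>S. \<forall>t\<in>S. s \<otimes>\<^bsub>R\<^esub> t \<in> S)"

definition loc_rel :: "('a, 'b) ring_scheme \<Rightarrow> 'a set \<Rightarrow> (('a \<times> 'a) \<times> ('a \<times> 'a)) set" where
  "loc_rel R S = {((a, s), (b, t)). a \<in> carrier R \<and> b \<in> carrier R \<and> s \<in> S \<and> t \<in> S \<and>
     (\<exists>u\<in>S. u \<otimes>\<^bsub>R\<^esub> ((t \<otimes>\<^bsub>R\<^esub> a) \<ominus>\<^bsub>R\<^esub> (s \<otimes>\<^bsub>R\<^esub> b)) = \<zero>\<^bsub>R\<^esub>)}"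

definition frac :: "('a, 'b) ring_scheme \<Rightarrow> 'a set \<Rightarrow> 'a \<Rightarrow> 'a \<Rightarrow> ('a \<times> 'a) set" where
  "frac R S a s = loc_rel R S `` {(a, s)}"

definition loc_add :: "('a, 'b) ring_scheme \<Rightarrow> 'a set \<Rightarrow> ('a \<times> 'a) set \<Rightarrow> ('a \<times> 'a) set \<Rightarrow> ('a \<times> 'a) set" where
  "loc_add R S U V = the_elem {z. \<exists>a s b t. (a, s) \<in> U \<and> (b, t) \<in> V \<and>
      z = frac R S ((a \<otimes>\<^bsub>R\<^esub> t) \<oplus>\<^bsub>R\<^esub> (b \<otimes>\<^bsub>R\<^esub> s)) (s \<otimes>\<^bsub>R\<^esub> t)}"

definition loc_mult :: "('a, 'b) ring_scheme \<Rightarrow> 'a set \<Rightarrow> ('a \<times> 'a) set \<Rightarrow> ('a \<times> 'a) set \<Rightarrow> ('a \<times> 'a) set" where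
  "loc_mult R S U V = the_elem {z. \<exists>a s b t. (a, s) \<in> U \<and> (b, t) \<in> V \<and>
      z = frac R S (a \<otimes>\<^bsub>R\<^esub> b) (s \<otimes>\<^bsub>R\<^esub> t)}"

definition Loc :: "('a, 'b) ring_scheme \<Rightarrow> 'a set \<Rightarrow> ('a \<times> 'a) set ring" where
  "Loc R S = \<lparr> Congruence.partial_object.carrier = (carrier R \<times> S) // loc_rel R S,
              Group.monoid.mult = loc_mult R S,
              Group.monoid.one = frac R S (\<one>\<^bsub>R\<^esub>) (\<one>\<^bsub>R\<^esub>),
              Ring.ring.zero = frac R S (\<zero>\<^bsub>R\<^esub>) (\<one>\<^bsub>R\<^esub>),
              Ring.ring.add = loc_add R S \<rparr>"

definition loc_ideal :: "('a, 'b) ring_scheme \<Rightarrow> 'a set \<Rightarrow> 'a set \<Rightarrow> ('a \<times> 'a) set set" where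
  "loc_ideal R S I = {frac R S a s | a s. a \<in> I \<and> s \<in> S}"

definition nilrad :: "('a, 'b) ring_scheme \<Rightarrow> 'a set" where
  "nilrad R = {a \<in> carrier R. \<exists>n::nat. a [^]\<^bsub>R\<^esub> n = \<zero>\<^bsub>R\<^esub>}"

definition expansion :: "('a, 'b) ring_scheme \<Rightarrow> ('a set \<Rightarrow> 'a set) \<Rightarrow> bool" where
  "expansion R \<delta> \<longleftrightarrow>
     (\<forall>I. ideal I R \<longrightarrow> ideal (\<delta> I) R \<and> I \<subseteq> \<delta> I) \<and>
     (\<forall>I J. ideal I R \<longrightarrow> ideal J R \<longrightarrow> I \<subseteq> J \<longrightarrow> \<delta> I \<subseteq> \<delta> J)"

definition delta_n_ideal :: "('a, 'b) ring_scheme \<Rightarrow> ('a set \<Rightarrow> 'a set) \<Rightarrow> 'a set \<Rightarrow> bool" where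
  "delta_n_ideal R \<delta> I \<longleftrightarrow> ideal I R \<and> I \<noteq> carrier R \<and>
     (\<forall>a\<in>carrier R. \<forall>b\<in>carrier R. a \<otimes>\<^bsub>R\<^esub> b \<in> I \<longrightarrow> a \<notin> nilrad R \<longrightarrow> b \<in> \<delta> I)"

text \<open>Zero-divisors Z(R) (0 counts as a zero-divisor in a nonzero ring).\<close>
definition zero_divs :: "('a, 'b) ring_scheme \<Rightarrow> 'a set" where
  "zero_divs R = {r \<in> carrier R. \<exists>s\<in>carrier R. s \<noteq> \<zero>\<^bsub>R\<^esub> \<and> r \<otimes>\<^bsub>R\<^esub> s = \<zero>\<^bsub>R\<^esub>}"

definition zero_divs_mod :: "('a, 'b) ring_scheme \<Rightarrow> 'a set \<Rightarrow> 'a set" where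
  "zero_divs_mod R J = {r \<in> carrier R. \<exists>s\<in>carrier R - J. r \<otimes>\<^bsub>R\<^esub> s \<in> J}"

end

theory Submission
  imports Defs
begin

(* Every element of S^{-1}R is a fraction a/s, and the two facts that drive the proof are:
   a/s lies in S^{-1}J iff u a \<in> J for some u \<in> S, and a/s is nilpotent iff u a^n = 0 for
   some u \<in> S and n.
   (1) If (a/s)(b/t) \<in> S^{-1}I with a/s not nilpotent, then a (u b) \<in> I for some u \<in> S and a is
   not nilpotent, so u b \<in> \<delta>(I) and b/t \<in> S^{-1}\<delta>(I) = \<delta>_S(S^{-1}I); S^{-1}I is proper because
   I \<inter> S is empty.
   (2) If a b \<in> I with a not nilpotent, then a/1 is not nilpotent since S contains no zero
   divisors, so b/1 \<in> S^{-1}\<delta>(I), i.e. u b \<in> \<delta>(I) for some u \<in> S, and u \<notin> Z_\<delta>(I)(R) forces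
   b \<in> \<delta>(I). *)

lemma (in cring) ideal_by_closure:
  assumes "J \<subseteq> carrier R" and "\<zero> \<in> J"
    and "\<And>x y. x \<in> J \<Longrightarrow> y \<in> J \<Longrightarrow> x \<oplus> y \<in> J"
    and "\<And>r x. r \<in> carrier R \<Longrightarrow> x \<in> J \<Longrightarrow> r \<otimes> x \<in> J"
  shows "ideal J R"
proof (rule idealI)
  have "\<ominus> x \<in> J" if "x \<in> J" for x
    using assms(1) assms(4)[of "\<ominus> \<one>" x] that by (auto simp: l_minus)
  then show "subgroup J (add_monoid R)"
    using assms(1-3) by (intro add.subgroupI) auto
  show "x \<otimes> a \<in> J" "a \<otimes> x \<in> J" if "a \<in> J" "x \<in> carrier R" for a x
    using assms(1,4) that by (auto simp: m_comm[of a x])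
qed (rule ring_axioms)

locale localization = cring R for R (structure) +
  fixes S :: "'a set"
  assumes mult_closed: "mult_closed R S"
begin

lemma S_carrier: "s \<in> S \<Longrightarrow> s \<in> carrier R"
  and one_in_S: "\<one> \<in> S"
  and S_m_closed: "s \<in> S \<Longrightarrow> t \<in> S \<Longrightarrow> s \<otimes> t \<in> S"
  using mult_closed by (auto simp: mult_closed_def)

lemma S_pow_closed: "s \<in> S \<Longrightarrow> s [^] (n::nat) \<in> S"
  by (induction n) (auto simp: one_in_S S_m_closed)

lemma loc_rel_iff:
  "((a, s), (b, t)) \<in> loc_rel R S \<longleftrightarrow> a \<in> carrier R \<and> b \<in> carrier R \<and> s \<in> S \<and> t \<in> S \<and>
     (\<exists>u\<in>S. u \<otimes> (t \<otimes> a \<ominus> s \<otimes> b) = \<zero>)"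
  by (simp add: loc_rel_def)

lemma equiv_loc_rel: "equiv (carrier R \<times> S) (loc_rel R S)"
proof (rule equivI)
  show "loc_rel R S \<subseteq> (carrier R \<times> S) \<times> (carrier R \<times> S)"
    by (auto simp: loc_rel_def)
  show "refl_on (carrier R \<times> S) (loc_rel R S)"
    using one_in_S by (auto simp: refl_on_def loc_rel_iff S_carrier m_comm a_minus_def r_neg)
  show "sym (loc_rel R S)"
  proof (rule symI, clarify)
    fix a s b t assume "((a, s), (b, t)) \<in> loc_rel R S"
    then obtain u where h: "a \<in> carrier R" "b \<in> carrier R" "s \<in> S" "t \<in> S" "u \<in> S"
      and u: "u \<otimes> (t \<otimes> a \<ominus> s \<otimes> b) = \<zero>" by (auto simp: loc_rel_iff)
    have "s \<in> carrier R" "t \<in> carrier R" "u \<in> carrier R" using h by (auto intro: S_carrier)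
    then have "u \<otimes> (s \<otimes> b \<ominus> t \<otimes> a) = \<ominus> (u \<otimes> (t \<otimes> a \<ominus> s \<otimes> b))"
      using h(1,2) by algebra
    with u h show "((b, t), (a, s)) \<in> loc_rel R S" by (auto simp: loc_rel_iff)
  qed
  show "trans (loc_rel R S)"
  proof (rule transI, clarify)
    fix a s b t c r
    assume "((a, s), (b, t)) \<in> loc_rel R S" "((b, t), (c, r)) \<in> loc_rel R S"
    then obtain u v where h: "a \<in> carrier R" "b \<in> carrier R" "c \<in> carrier R" "s \<in> S" "t \<in> S"
        "r \<in> S" "u \<in> S" "v \<in> S"
      and u: "u \<otimes> (t \<otimes> a \<ominus> s \<otimes> b) = \<zero>" and v: "v \<otimes> (r \<otimes> b \<ominus> t \<otimes> c) = \<zero>"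
      by (auto simp: loc_rel_iff)
    have "r \<in> carrier R" "s \<in> carrier R" "t \<in> carrier R" "u \<in> carrier R" "v \<in> carrier R"
      using h by (auto intro: S_carrier)
    then have "(u \<otimes> v \<otimes> t) \<otimes> (r \<otimes> a \<ominus> s \<otimes> c) =
        (v \<otimes> r) \<otimes> (u \<otimes> (t \<otimes> a \<ominus> s \<otimes> b)) \<oplus> (u \<otimes> s) \<otimes> (v \<otimes> (r \<otimes> b \<ominus> t \<otimes> c))"
      using h(1-3) by algebra
    also have "\<dots> = \<zero>" using h u v by (simp add: S_carrier)
    finally show "((a, s), (c, r)) \<in> loc_rel R S"
      using h by (auto simp: loc_rel_iff S_m_closed)
  qed
qed

lemma frac_eq_iff:
  assumes "a \<in> carrier R" "b \<in> carrier R" "s \<in> S" "t \<in> S"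
  shows "frac R S a s = frac R S b t \<longleftrightarrow> (\<exists>u\<in>S. u \<otimes> (t \<otimes> a \<ominus> s \<otimes> b) = \<zero>)"
  unfolding frac_def using assms
  by (subst eq_equiv_class_iff[OF equiv_loc_rel]) (auto simp: loc_rel_iff)

lemma frac_eq_witnessI:
  assumes "a \<in> carrier R" "b \<in> carrier R" "s \<in> S" "t \<in> S"
    and "u \<in> S" "u \<otimes> (t \<otimes> a \<ominus> s \<otimes> b) = \<zero>"
  shows "frac R S a s = frac R S b t"
  using assms frac_eq_iff by blast

lemma frac_eqI:
  assumes "a \<in> carrier R" "b \<in> carrier R" "s \<in> S" "t \<in> S" "t \<otimes> a = s \<otimes> b"
  shows "frac R S a s = frac R S b t"
  using assms one_in_S by (intro frac_eq_witnessI[where u = \<one>]) (auto simp: S_carrier a_minus_def r_neg)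

lemma carrier_Loc: "carrier (Loc R S) = {frac R S a s | a s. a \<in> carrier R \<and> s \<in> S}"
  by (auto simp: Loc_def quotient_def frac_def)

lemma frac_closed: "a \<in> carrier R \<Longrightarrow> s \<in> S \<Longrightarrow> frac R S a s \<in> carrier (Loc R S)"
  by (auto simp: carrier_Loc)

lemma Loc_elim:
  assumes "x \<in> carrier (Loc R S)"
  obtains a s where "a \<in> carrier R" "s \<in> S" "x = frac R S a s"
  using assms by (auto simp: carrier_Loc)

lemma mem_frac_iff:
  "(b, t) \<in> frac R S a s \<longleftrightarrow> b \<in> carrier R \<and> t \<in> S \<and> a \<in> carrier R \<and> s \<in> S \<and>
     frac R S a s = frac R S b t"
  by (auto simp: frac_def equiv_class_eq_iff[OF equiv_loc_rel])

(* loc_add and loc_mult pick the common value of the operation over all representatives, so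
   evaluating them on fractions amounts to checking that this value is independent of the
   representatives. *)
lemma the_elem_frac_lift:
  assumes "a \<in> carrier R" "b \<in> carrier R" "s \<in> S" "t \<in> S"
    and respects: "\<And>a' s' b' t'. a' \<in> carrier R \<Longrightarrow> b' \<in> carrier R \<Longrightarrow> s' \<in> S \<Longrightarrow> t' \<in> S \<Longrightarrow>
      frac R S a s = frac R S a' s' \<Longrightarrow> frac R S b t = frac R S b' t' \<Longrightarrow>
      frac R S (N a' s' b' t') (D a' s' b' t') = frac R S (N a s b t) (D a s b t)"
  shows "the_elem {z. \<exists>a' s' b' t'. (a', s') \<in> frac R S a s \<and> (b', t') \<in> frac R S b t \<and>
      z = frac R S (N a' s' b' t') (D a' s' b' t')} = frac R S (N a s b t) (D a s b t)"
    (is "the_elem ?Z = ?q")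
proof -
  have "?Z = {?q}"
  proof (intro equalityI subsetI)
    fix z assume "z \<in> ?Z"
    then obtain a' s' b' t' where "(a', s') \<in> frac R S a s" "(b', t') \<in> frac R S b t"
      and "z = frac R S (N a' s' b' t') (D a' s' b' t')" by blast
    then show "z \<in> {?q}"
      unfolding mem_frac_iff using respects[of a' b' s' t'] by blast
  next
    fix z assume "z \<in> {?q}"
    moreover have "(a, s) \<in> frac R S a s" "(b, t) \<in> frac R S b t"
      using assms by (simp_all add: mem_frac_iff)
    ultimately show "z \<in> ?Z" by blast
  qed
  then show ?thesis by simp
qed

lemma loc_mult_frac:
  assumes "a \<in> carrier R" "b \<in> carrier R" "s \<in> S" "t \<in> S"
  shows "loc_mult R S (frac R S a s) (frac R S b t) = frac R S (a \<otimes> b) (s \<otimes> t)"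
  unfolding loc_mult_def
proof (rule the_elem_frac_lift[where N = "\<lambda>a s b t. a \<otimes> b" and D = "\<lambda>a s b t. s \<otimes> t", OF assms])
  fix a' s' b' t'
  assume h: "a' \<in> carrier R" "b' \<in> carrier R" "s' \<in> S" "t' \<in> S"
    and "frac R S a s = frac R S a' s'" "frac R S b t = frac R S b' t'"
  then obtain u v where "u \<in> S" "v \<in> S"
    and u: "u \<otimes> (s' \<otimes> a \<ominus> s \<otimes> a') = \<zero>" and v: "v \<otimes> (t' \<otimes> b \<ominus> t \<otimes> b') = \<zero>"
    using assms by (auto simp: frac_eq_iff)
  have c: "s \<in> carrier R" "t \<in> carrier R" "s' \<in> carrier R" "t' \<in> carrier R"
    "u \<in> carrier R" "v \<in> carrier R"
    using h assms \<open>u \<in> S\<close> \<open>v \<in> S\<close> by (auto intro: S_carrier)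
  have "(u \<otimes> v) \<otimes> ((s \<otimes> t) \<otimes> (a' \<otimes> b') \<ominus> (s' \<otimes> t') \<otimes> (a \<otimes> b)) =
      \<ominus> ((v \<otimes> t' \<otimes> b) \<otimes> (u \<otimes> (s' \<otimes> a \<ominus> s \<otimes> a')) \<oplus> (u \<otimes> s \<otimes> a') \<otimes> (v \<otimes> (t' \<otimes> b \<ominus> t \<otimes> b')))"
    using c h(1,2) assms(1,2) by algebra
  also have "\<dots> = \<zero>"
    using u v c h(1,2) assms(1,2) by simp
  finally have "(u \<otimes> v) \<otimes> ((s \<otimes> t) \<otimes> (a' \<otimes> b') \<ominus> (s' \<otimes> t') \<otimes> (a \<otimes> b)) = \<zero>" .
  then show "frac R S (a' \<otimes> b') (s' \<otimes> t') = frac R S (a \<otimes> b) (s \<otimes> t)"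
    using h assms \<open>u \<in> S\<close> \<open>v \<in> S\<close>
    by (intro frac_eq_witnessI[where u = "u \<otimes> v"]) (auto intro: S_m_closed)
qed

lemma loc_add_frac:
  assumes "a \<in> carrier R" "b \<in> carrier R" "s \<in> S" "t \<in> S"
  shows "loc_add R S (frac R S a s) (frac R S b t) = frac R S (a \<otimes> t \<oplus> b \<otimes> s) (s \<otimes> t)"
  unfolding loc_add_def
proof (rule the_elem_frac_lift[where N = "\<lambda>a s b t. a \<otimes> t \<oplus> b \<otimes> s" and D = "\<lambda>a s b t. s \<otimes> t", OF assms])
  fix a' s' b' t'
  assume h: "a' \<in> carrier R" "b' \<in> carrier R" "s' \<in> S" "t' \<in> S"
    and "frac R S a s = frac R S a' s'" "frac R S b t = frac R S b' t'"
  then obtain u v where "u \<in> S" "v \<in> S"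
    and u: "u \<otimes> (s' \<otimes> a \<ominus> s \<otimes> a') = \<zero>" and v: "v \<otimes> (t' \<otimes> b \<ominus> t \<otimes> b') = \<zero>"
    using assms by (auto simp: frac_eq_iff)
  have c: "s \<in> carrier R" "t \<in> carrier R" "s' \<in> carrier R" "t' \<in> carrier R"
    "u \<in> carrier R" "v \<in> carrier R"
    using h assms \<open>u \<in> S\<close> \<open>v \<in> S\<close> by (auto intro: S_carrier)
  have "(u \<otimes> v) \<otimes> ((s \<otimes> t) \<otimes> (a' \<otimes> t' \<oplus> b' \<otimes> s') \<ominus> (s' \<otimes> t') \<otimes> (a \<otimes> t \<oplus> b \<otimes> s)) =
      \<ominus> ((v \<otimes> t \<otimes> t') \<otimes> (u \<otimes> (s' \<otimes> a \<ominus> s \<otimes> a')) \<oplus> (u \<otimes> s \<otimes> s') \<otimes> (v \<otimes> (t' \<otimes> b \<ominus> t \<otimes> b')))"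
    using c h(1,2) assms(1,2) by algebra
  also have "\<dots> = \<zero>"
    using u v c h(1,2) assms(1,2) by simp
  finally have "(u \<otimes> v) \<otimes> ((s \<otimes> t) \<otimes> (a' \<otimes> t' \<oplus> b' \<otimes> s') \<ominus> (s' \<otimes> t') \<otimes> (a \<otimes> t \<oplus> b \<otimes> s)) = \<zero>" .
  then show "frac R S (a' \<otimes> t' \<oplus> b' \<otimes> s') (s' \<otimes> t') = frac R S (a \<otimes> t \<oplus> b \<otimes> s) (s \<otimes> t)"
    using h assms c \<open>u \<in> S\<close> \<open>v \<in> S\<close>
    by (intro frac_eq_witnessI[where u = "u \<otimes> v"]) (auto intro: S_m_closed)
qed

lemma Loc_simps:
  "Group.monoid.mult (Loc R S) = loc_mult R S" "Ring.ring.add (Loc R S) = loc_add R S"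
  "Group.monoid.one (Loc R S) = frac R S \<one> \<one>" "Ring.ring.zero (Loc R S) = frac R S \<zero> \<one>"
  by (simp_all add: Loc_def)

lemma frac_ring_laws:
  assumes "a \<in> carrier R" "b \<in> carrier R" "c \<in> carrier R" "s \<in> S" "t \<in> S" "r \<in> S"
  defines "x \<equiv> frac R S a s" and "y \<equiv> frac R S b t" and "z \<equiv> frac R S c r"
  shows "loc_add R S (loc_add R S x y) z = loc_add R S x (loc_add R S y z)"
    and "loc_add R S x y = loc_add R S y x"
    and "loc_add R S (frac R S \<zero> \<one>) x = x"
    and "loc_add R S (frac R S (\<ominus> a) s) x = frac R S \<zero> \<one>"
    and "loc_mult R S (loc_mult R S x y) z = loc_mult R S x (loc_mult R S y z)"
    and "loc_mult R S x y = loc_mult R S y x"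
    and "loc_mult R S (frac R S \<one> \<one>) x = x"
    and "loc_mult R S (loc_add R S x y) z = loc_add R S (loc_mult R S x z) (loc_mult R S y z)"
  using assms(1-6) S_carrier[OF assms(4)] S_carrier[OF assms(5)] S_carrier[OF assms(6)] one_in_S
  by (simp_all add: x_def y_def z_def loc_add_frac loc_mult_frac S_m_closed)
    (rule frac_eqI; (simp add: S_m_closed; fail)?; algebra)+

lemma Loc_cring: "cring (Loc R S)"
proof (rule cringI)
  show "abelian_group (Loc R S)"
  proof (rule abelian_groupI)
    show "x \<oplus>\<^bsub>Loc R S\<^esub> y \<in> carrier (Loc R S)"
      if "x \<in> carrier (Loc R S)" "y \<in> carrier (Loc R S)" for x y
      using that by (auto elim!: Loc_elim simp: Loc_simps loc_add_frac S_carrier S_m_closed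
          intro!: frac_closed)
    show "\<exists>y\<in>carrier (Loc R S). y \<oplus>\<^bsub>Loc R S\<^esub> x = \<zero>\<^bsub>Loc R S\<^esub>"
      if "x \<in> carrier (Loc R S)" for x
    proof -
      obtain a s where "a \<in> carrier R" "s \<in> S" "x = frac R S a s"
        using \<open>x \<in> carrier (Loc R S)\<close> by (rule Loc_elim)
      then show ?thesis
        by (intro bexI[of _ "frac R S (\<ominus> a) s"]) (auto simp: Loc_simps frac_ring_laws(4) intro: frac_closed)
    qed
    show "x \<oplus>\<^bsub>Loc R S\<^esub> y = y \<oplus>\<^bsub>Loc R S\<^esub> x"
      if "x \<in> carrier (Loc R S)" "y \<in> carrier (Loc R S)" for x y
      using that by (auto elim!: Loc_elim simp: Loc_simps frac_ring_laws(2))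
  qed (auto elim!: Loc_elim simp: Loc_simps frac_ring_laws(1,3) one_in_S intro!: frac_closed)
  show "comm_monoid (Loc R S)"
  proof (rule comm_monoidI)
    show "x \<otimes>\<^bsub>Loc R S\<^esub> y \<in> carrier (Loc R S)"
      if "x \<in> carrier (Loc R S)" "y \<in> carrier (Loc R S)" for x y
      using that by (auto elim!: Loc_elim simp: Loc_simps loc_mult_frac S_m_closed intro!: frac_closed)
    show "x \<otimes>\<^bsub>Loc R S\<^esub> y = y \<otimes>\<^bsub>Loc R S\<^esub> x"
      if "x \<in> carrier (Loc R S)" "y \<in> carrier (Loc R S)" for x y
      using that by (auto elim!: Loc_elim simp: Loc_simps frac_ring_laws(6))
  qed (auto elim!: Loc_elim simp: Loc_simps frac_ring_laws(5,7) one_in_S intro!: frac_closed)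
qed (auto elim!: Loc_elim simp: Loc_simps frac_ring_laws(8))

lemma frac_mem_loc_ideal_iff:
  assumes J: "ideal J R" and "a \<in> carrier R" "s \<in> S"
  shows "frac R S a s \<in> loc_ideal R S J \<longleftrightarrow> (\<exists>u\<in>S. u \<otimes> a \<in> J)"
proof
  assume "frac R S a s \<in> loc_ideal R S J"
  then obtain c v where "c \<in> J" "v \<in> S" "frac R S a s = frac R S c v"
    by (auto simp: loc_ideal_def)
  moreover have "c \<in> carrier R"
    using J \<open>c \<in> J\<close> by (rule ideal.Icarr)
  ultimately obtain u where "u \<in> S" and u: "u \<otimes> (v \<otimes> a \<ominus> s \<otimes> c) = \<zero>"
    using assms by (auto simp: frac_eq_iff)
  have c: "u \<in> carrier R" "v \<in> carrier R" "s \<in> carrier R"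
    using \<open>u \<in> S\<close> \<open>v \<in> S\<close> assms by (auto intro: S_carrier)
  have "(u \<otimes> v) \<otimes> a = u \<otimes> (v \<otimes> a \<ominus> s \<otimes> c) \<oplus> (u \<otimes> s) \<otimes> c"
    using c \<open>c \<in> carrier R\<close> assms(2) by algebra
  also have "\<dots> = (u \<otimes> s) \<otimes> c"
    using u c \<open>c \<in> carrier R\<close> by simp
  also have "\<dots> \<in> J"
    using J \<open>c \<in> J\<close> c by (simp add: ideal.I_l_closed)
  finally show "\<exists>u\<in>S. u \<otimes> a \<in> J"
    using \<open>u \<in> S\<close> \<open>v \<in> S\<close> S_m_closed by blast
next
  assume "\<exists>u\<in>S. u \<otimes> a \<in> J"
  then obtain u where "u \<in> S" "u \<otimes> a \<in> J" by blast
  moreover have "frac R S a s = frac R S (u \<otimes> a) (u \<otimes> s)"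
    using \<open>u \<in> S\<close> assms S_carrier[OF \<open>u \<in> S\<close>] S_carrier[OF \<open>s \<in> S\<close>]
    by (intro frac_eqI) (auto simp: S_m_closed m_ac)
  ultimately show "frac R S a s \<in> loc_ideal R S J"
    using assms by (auto simp: loc_ideal_def intro: S_m_closed)
qed

lemma ideal_loc_ideal:
  assumes J: "ideal J R"
  shows "ideal (loc_ideal R S J) (Loc R S)"
proof (rule cring.ideal_by_closure[OF Loc_cring])
  have J_carrier: "\<And>a. a \<in> J \<Longrightarrow> a \<in> carrier R"
    using J by (rule ideal.Icarr)
  show "loc_ideal R S J \<subseteq> carrier (Loc R S)"
    by (auto simp: loc_ideal_def J_carrier intro: frac_closed)
  show "\<zero>\<^bsub>Loc R S\<^esub> \<in> loc_ideal R S J"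
  proof -
    have "\<zero> \<in> J"
      using J by (simp add: additive_subgroup.zero_closed ideal.axioms(1))
    then show ?thesis
      using one_in_S by (auto simp: loc_ideal_def Loc_simps)
  qed
  show "x \<oplus>\<^bsub>Loc R S\<^esub> y \<in> loc_ideal R S J"
    if xy: "x \<in> loc_ideal R S J" "y \<in> loc_ideal R S J" for x y
  proof -
    obtain a s b t where "a \<in> J" "s \<in> S" "b \<in> J" "t \<in> S" "x = frac R S a s" "y = frac R S b t"
      using xy unfolding loc_ideal_def by blast
    moreover have "a \<otimes> t \<oplus> b \<otimes> s \<in> J"
      using J calculation by (auto simp: S_carrier ideal.I_r_closed additive_subgroup.a_closed ideal_def)
    ultimately show ?thesis
      by (auto simp: Loc_simps loc_add_frac J_carrier loc_ideal_def intro: S_m_closed)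
  qed
  show "r \<otimes>\<^bsub>Loc R S\<^esub> x \<in> loc_ideal R S J"
    if rx: "r \<in> carrier (Loc R S)" "x \<in> loc_ideal R S J" for r x
  proof -
    obtain b t a s where "b \<in> carrier R" "t \<in> S" "a \<in> J" "s \<in> S" "r = frac R S b t" "x = frac R S a s"
      using rx unfolding loc_ideal_def by (blast elim: Loc_elim)
    moreover have "b \<otimes> a \<in> J"
      using J calculation by (simp add: ideal.I_l_closed)
    ultimately show ?thesis
      by (auto simp: Loc_simps loc_mult_frac J_carrier loc_ideal_def intro: S_m_closed)
  qed
qed

lemma loc_ideal_carrier: "loc_ideal R S (carrier R) = carrier (Loc R S)"
  by (simp add: loc_ideal_def carrier_Loc)

lemma loc_ideal_proper:
  assumes "ideal J R" and "J \<inter> S = {}"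
  shows "loc_ideal R S J \<noteq> carrier (Loc R S)"
proof
  assume "loc_ideal R S J = carrier (Loc R S)"
  then have "frac R S \<one> \<one> \<in> loc_ideal R S J"
    using one_in_S by (auto intro: frac_closed)
  then obtain u where "u \<in> S" "u \<otimes> \<one> \<in> J"
    using assms(1) one_in_S by (auto simp: frac_mem_loc_ideal_iff)
  then show False
    using assms(2) S_carrier by auto
qed

lemma frac_pow:
  assumes "a \<in> carrier R" "s \<in> S"
  shows "frac R S a s [^]\<^bsub>Loc R S\<^esub> (n::nat) = frac R S (a [^] n) (s [^] n)"
  using assms by (induction n) (auto simp: Loc_simps loc_mult_frac S_pow_closed)

lemma frac_eq_zero_iff:
  assumes "a \<in> carrier R" "s \<in> S"
  shows "frac R S a s = \<zero>\<^bsub>Loc R S\<^esub> \<longleftrightarrow> (\<exists>u\<in>S. u \<otimes> a = \<zero>)"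
  using assms one_in_S by (simp add: Loc_simps frac_eq_iff S_carrier a_minus_def)

lemma frac_mem_nilrad_iff:
  assumes "a \<in> carrier R" "s \<in> S"
  shows "frac R S a s \<in> nilrad (Loc R S) \<longleftrightarrow> (\<exists>n. \<exists>u\<in>S. u \<otimes> a [^] (n::nat) = \<zero>)"
  using assms by (simp add: nilrad_def frac_closed frac_pow frac_eq_zero_iff S_pow_closed)

lemma delta_n_ideal_loc_ideal:
  assumes "expansion R \<delta>" and "delta_n_ideal R \<delta> I" and "I \<inter> S = {}"
    and \<delta>S: "\<delta>S (loc_ideal R S I) = loc_ideal R S (\<delta> I)"
  shows "delta_n_ideal (Loc R S) \<delta>S (loc_ideal R S I)"
proof -
  have I: "ideal I R" and \<delta>I: "ideal (\<delta> I) R"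
    using assms(1,2) by (auto simp: delta_n_ideal_def expansion_def)
  have "y \<in> \<delta>S (loc_ideal R S I)"
    if x: "x \<in> carrier (Loc R S)" and y: "y \<in> carrier (Loc R S)"
      and xy: "x \<otimes>\<^bsub>Loc R S\<^esub> y \<in> loc_ideal R S I" and x_nil: "x \<notin> nilrad (Loc R S)" for x y
  proof -
    obtain a s where a: "a \<in> carrier R" "s \<in> S" "x = frac R S a s"
      using x by (rule Loc_elim)
    obtain b t where b: "b \<in> carrier R" "t \<in> S" "y = frac R S b t"
      using y by (rule Loc_elim)
    have "frac R S (a \<otimes> b) (s \<otimes> t) \<in> loc_ideal R S I"
      using xy a b by (simp add: Loc_simps loc_mult_frac)
    then obtain u where "u \<in> S" "u \<otimes> (a \<otimes> b) \<in> I"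
      using I a b by (auto simp: frac_mem_loc_ideal_iff S_m_closed)
    then have "a \<otimes> (u \<otimes> b) \<in> I"
      using a b S_carrier[OF \<open>u \<in> S\<close>] by (simp add: m_lcomm)
    moreover have "a \<notin> nilrad R"
    proof
      assume "a \<in> nilrad R"
      then obtain n :: nat where "\<one> \<otimes> a [^] n = \<zero>"
        by (auto simp: nilrad_def)
      then have "x \<in> nilrad (Loc R S)"
        unfolding a(3) frac_mem_nilrad_iff[OF a(1,2)] using one_in_S by blast
      then show False
        using x_nil by contradiction
    qed
    ultimately have "u \<otimes> b \<in> \<delta> I"
      using assms(2) a(1) b(1) S_carrier[OF \<open>u \<in> S\<close>] unfolding delta_n_ideal_def by blast
    then show ?thesis
      unfolding \<delta>S b(3) frac_mem_loc_ideal_iff[OF \<delta>I b(1,2)] using \<open>u \<in> S\<close> by blast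
  qed
  then show ?thesis
    using I assms(3) by (simp add: delta_n_ideal_def ideal_loc_ideal loc_ideal_proper)
qed

lemma delta_n_ideal_of_loc_ideal:
  assumes "expansion R \<delta>" and "ideal I R"
    and "S \<inter> zero_divs R = {}" and "S \<inter> zero_divs_mod R (\<delta> I) = {}"
    and \<delta>S: "\<delta>S (loc_ideal R S I) = loc_ideal R S (\<delta> I)"
    and "delta_n_ideal (Loc R S) \<delta>S (loc_ideal R S I)"
  shows "delta_n_ideal R \<delta> I"
proof -
  have \<delta>I: "ideal (\<delta> I) R"
    using assms(1,2) by (simp add: expansion_def)
  have "b \<in> \<delta> I"
    if a: "a \<in> carrier R" and b: "b \<in> carrier R" and ab: "a \<otimes> b \<in> I" and a_nil: "a \<notin> nilrad R"
    for a b
  proof -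
    have "frac R S a \<one> \<otimes>\<^bsub>Loc R S\<^esub> frac R S b \<one> \<in> loc_ideal R S I"
      using assms(2) a b ab one_in_S
      by (auto simp: Loc_simps loc_mult_frac frac_mem_loc_ideal_iff intro!: bexI[of _ \<one>])
    moreover have "frac R S a \<one> \<notin> nilrad (Loc R S)"
    proof
      assume "frac R S a \<one> \<in> nilrad (Loc R S)"
      then obtain n u where "u \<in> S" "u \<otimes> a [^] (n::nat) = \<zero>"
        using a one_in_S by (auto simp: frac_mem_nilrad_iff)
      then have "a [^] n = \<zero>"
        using assms(3) a S_carrier[OF \<open>u \<in> S\<close>] by (auto simp: zero_divs_def)
      then show False
        using a a_nil by (auto simp: nilrad_def)
    qed
    ultimately have "frac R S b \<one> \<in> loc_ideal R S (\<delta> I)"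
      using assms(6) a b one_in_S by (auto simp: delta_n_ideal_def \<delta>S intro: frac_closed)
    then obtain u where "u \<in> S" "u \<otimes> b \<in> \<delta> I"
      using \<delta>I b one_in_S by (auto simp: frac_mem_loc_ideal_iff)
    then show "b \<in> \<delta> I"
      using assms(4) b S_carrier[OF \<open>u \<in> S\<close>] by (auto simp: zero_divs_mod_def)
  qed
  moreover have "I \<noteq> carrier R"
    using assms(6) by (auto simp: delta_n_ideal_def loc_ideal_carrier)
  ultimately show ?thesis
    using assms(2) by (simp add: delta_n_ideal_def)
qed

end

theorem proposition2p24:
  fixes R :: "('a, 'b) ring_scheme" and S :: "'a set"
    and \<delta> :: "'a set \<Rightarrow> 'a set" and \<delta>S :: "('a \<times> 'a) set set \<Rightarrow> ('a \<times> 'a) set set"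
    and I :: "'a set"
  assumes "cring R" and "\<one>\<^bsub>R\<^esub> \<noteq> \<zero>\<^bsub>R\<^esub>"
    and "mult_closed R S"
    and "expansion R \<delta>"
    and "expansion (Loc R S) \<delta>S"
    and "\<forall>J. ideal J R \<longrightarrow> \<delta>S (loc_ideal R S J) = loc_ideal R S (\<delta> J)"
    and "ideal I R"
  shows "(delta_n_ideal R \<delta> I \<and> I \<inter> S = {} \<longrightarrow> delta_n_ideal (Loc R S) \<delta>S (loc_ideal R S I))
       \<and> (S \<inter> zero_divs R = {} \<and> S \<inter> zero_divs_mod R (\<delta> I) = {}
            \<and> delta_n_ideal (Loc R S) \<delta>S (loc_ideal R S I) \<longrightarrow> delta_n_ideal R \<delta> I)"
proof -
  interpret localization R S
    using assms(1,3) by (rule localization.intro[OF _ localization_axioms.intro])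
  have \<delta>S: "\<delta>S (loc_ideal R S I) = loc_ideal R S (\<delta> I)"
    using assms(6,7) by blast
  show ?thesis
    using delta_n_ideal_loc_ideal[of \<delta> I \<delta>S, OF assms(4) _ _ \<delta>S]
      delta_n_ideal_of_loc_ideal[of \<delta> I \<delta>S, OF assms(4,7) _ _ \<delta>S]
    by blast
qed

end
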